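(* Let $m \in \mathbb{F}_2[t]$ be odd with $\deg m = d$, and let $N \ge 1$. The map $\Phi_m : \mathbb{F}_2[t]/(t^N) \to \{0,1\}^N$ sending the class of $f$ to the first $N$ terms $(p_0,\dots,p_{N-1})$ of the parity sequence of $f$ is well defined and is a bijection. Moreover, for each $(p_0,\dots,p_{N-1}) \in \{0,1\}^N$, with $s(N) = \sum_{i=0}^{N-1} p_i$, there exist $g_{N-1}, h_{N-1} \in \mathbb{F}_2[t]$ with $\deg g_{N-1} < N$ and $\deg h_{N-1} < d\, s(N)$ such that the polynomials whose parity sequence begins with $(p_0,\dots,p_{N-1})$ are exactly those of the form $f = g_{N-1} + t^N q$ with $q \in \mathbb{F}_2[t]$, and for every such $f$ one has $T^N(f) = h_{N-1} + m^{s(N)} q$. In particular, the first $N$ parity terms of a uniformly random polynomial of degree $< N$ are uniformly distributed on $\{0,1\}^N$.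
   Context: A polynomial $m \in \mathbb{F}_2[t]$ is called odd if $m(0) = 1$. For a fixed odd $m$, the $mx+1$ map $T:\mathbb{F}_2[t]\to\mathbb{F}_2[t]$ is $T(f) = f/t$ if $f \equiv 0 \pmod t$ and $T(f) = (mf+1)/t$ if $f \not\equiv 0 \pmod t$. Degrees are in $t$, with $\deg 0 = -\infty$. The parity sequence of $f$ is $(p_0, p_1, p_2, \dots)$ where $p_k = T^k(f)(0) \in \{0,1\}$ is the constant term of $T^k(f)$. *)

theory Defs
  imports "HOL-Library.Z2" "HOL-Computational_Algebra.Polynomial" "HOL-Probability.Probability"
begin

definition odd_poly :: "bit poly \<Rightarrow> bool" where
  "odd_poly m \<longleftrightarrow> coeff m 0 = 1"

definition mxT :: "bit poly \<Rightarrow> bit poly \<Rightarrow> bit poly" where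
  "mxT m f = (if coeff f 0 = 0 then f div [:0, 1:] else (m * f + 1) div [:0, 1:])"

definition parity_term :: "bit poly \<Rightarrow> bit poly \<Rightarrow> nat \<Rightarrow> bit" where
  "parity_term m f k = coeff ((mxT m ^^ k) f) 0"

definition parity_prefix :: "bit poly \<Rightarrow> nat \<Rightarrow> bit poly \<Rightarrow> bit list" where
  "parity_prefix m N f = map (parity_term m f) [0..<N]"

definition ones_count :: "bit list \<Rightarrow> nat" where
  "ones_count ps = sum_list (map (\<lambda>b. if b = 1 then 1 else 0) ps)"

end

theory Submission
  imports Defs
begin

text \<open>The map is affine on each residue class modulo \<open>t\<close>:
  \<open>T (x + t z) = T x + m\<^sup>p z\<close> with \<open>p\<close> the parity of \<open>x\<close>. Iterating, if the
  polynomials with a given parity prefix of length \<open>N\<close> form a coset \<open>g + t\<^sup>N \<bbbF>\<^sub>2[t]\<close>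
  on which \<open>T\<^sup>N (g + t\<^sup>N q) = h + m\<^sup>s q\<close>, then the next parity bit is
  \<open>h(0) + q(0)\<close>, because the odd polynomial \<open>m\<^sup>s\<close> has constant term \<open>1\<close>. So prescribing
  that bit fixes exactly one more coefficient of \<open>f\<close>, and the cosets refine one
  \<open>t\<close>-adic digit at a time. The parity prefixes of length \<open>N\<close> therefore correspond
  bijectively to the residues modulo \<open>t\<^sup>N\<close>.\<close>

text \<open>\<open>deg_less p n\<close> means \<open>p = 0 \<or> degree p < n\<close>; it sidesteps the junk value
  \<open>degree 0 = 0\<close>, which would make the bound \<open>degree h < d s\<close> fail for \<open>s = 0\<close>.\<close>

definition deg_less :: "'a::zero poly \<Rightarrow> nat \<Rightarrow> bool" where
  "deg_less p n \<longleftrightarrow> (\<forall>i\<ge>n. coeff p i = 0)"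

lemma deg_less_iff: "deg_less p n \<longleftrightarrow> p = 0 \<or> degree p < n"
  unfolding deg_less_def
  by (metis coeff_0 coeff_eq_0 le_less_trans leading_coeff_0_iff not_le)

lemma deg_less_add_monom: "deg_less g n \<Longrightarrow> deg_less (g + monom c n) (Suc n)"
  by (simp add: deg_less_def coeff_monom)

lemma pCons_div_X: "pCons a p div [:0, 1:] = (p :: 'a::field poly)"
proof -
  have "pCons a p div [:0, 1:] = ([:a:] + p * [:0, 1:]) div [:0, 1:]"
    by (rule arg_cong[where f = "\<lambda>r. r div [:0, 1:]"]) simp
  also have "\<dots> = p + [:a:] div [:0, 1:]"
    by (rule div_mult_self1) simp
  also have "[:a:] div [:0, 1:] = 0"
    by (rule div_poly_less) simp
  finally show ?thesis by simp
qed

lemma deg_less_div_X: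
  fixes p :: "'a::field poly"
  assumes "degree p \<le> n"
  shows "deg_less (p div [:0, 1:]) n"
proof (cases p)
  case (pCons a q)
  have "coeff q i = 0" if "n \<le> i" for i
    using assms that coeff_eq_0[of p "Suc i"] pCons by simp
  then show ?thesis using pCons by (simp add: deg_less_def pCons_div_X)
qed

lemma eq_if_X_power_dvd_diff:
  fixes f g :: "'a::idom poly"
  assumes "degree f < N" and "degree g < N" and "[:0, 1:] ^ N dvd f - g"
  shows "f = g"
proof (rule ccontr)
  assume "f \<noteq> g"
  moreover have "degree ([:0, 1:] ^ N :: 'a poly) = N"
    by (rule degree_linear_power)
  ultimately have "N \<le> degree (f - g)"
    using dvd_imp_degree_le[OF assms(3)] by simp
  moreover have "degree (f - g) \<le> max (degree f) (degree g)"
    by (rule degree_diff_le_max)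
  ultimately show False using assms(1,2) by simp
qed

lemma ex_coeff_0_eq_iff: "(\<exists>q. P q \<and> coeff q 0 = c) \<longleftrightarrow> (\<exists>q. P (pCons c q))"
  by (metis coeff_pCons_0 pCons_cases)

lemma bit_add_eq_iff: "(a :: bit) + x = b \<longleftrightarrow> x = b + a"
  by (cases a; cases b; cases x) simp_all

lemma finite_bit_lists_length_eq: "finite {ps :: bit list. length ps = N}"
proof -
  have "(UNIV :: bit set) = {0, 1}"
    by auto
  then have "finite (UNIV :: bit set)"
    by (metis finite.emptyI finite.insertI)
  then show ?thesis
    using finite_lists_length_eq[of "UNIV :: bit set" N] by simp
qed

abbreviation tt :: "bit poly" where "tt \<equiv> [:0, 1:]"

lemma coeff_0_odd_power: "odd_poly m \<Longrightarrow> coeff (m ^ s) 0 = 1"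
  by (simp add: odd_poly_def coeff_0_power)

lemma mxT_add_tt_mult:
  "mxT m (x + tt * z) = mxT m x + (if coeff x 0 = 1 then m * z else z)"
proof (cases "coeff x 0 = 1")
  case True
  have "(m * (x + tt * z) + 1) div tt = ((m * x + 1) + (m * z) * tt) div tt"
    by (rule arg_cong[where f = "\<lambda>r. r div tt"]) (simp add: algebra_simps)
  also have "\<dots> = m * z + (m * x + 1) div tt"
    by (rule div_mult_self1) simp
  finally show ?thesis
    using True by (simp add: mxT_def add.commute)
next
  case False
  have "(x + tt * z) div tt = (x + z * tt) div tt"
    by (simp only: mult.commute)
  also have "\<dots> = z + x div tt"
    by (rule div_mult_self1) simp
  finally show ?thesis
    using False by (simp add: mxT_def add.commute)
qed

lemma deg_less_mxT:
  assumes "degree x \<le> D"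
  shows "deg_less (mxT m x) (if coeff x 0 = 1 then D + degree m else D)"
proof (cases "coeff x 0 = 1")
  case True
  have "degree (m * x) \<le> D + degree m"
    using degree_mult_le[of m x] assms by simp
  then have "degree (m * x + 1) \<le> D + degree m"
    by (rule degree_add_le) simp
  then show ?thesis using True by (simp add: mxT_def deg_less_div_X)
next
  case False
  then show ?thesis using assms by (simp add: mxT_def deg_less_div_X)
qed

lemma parity_prefix_snoc: "parity_prefix m (Suc n) f = parity_prefix m n f @ [parity_term m f n]"
  by (simp add: parity_prefix_def)

lemma ones_count_snoc: "ones_count (ps @ [b]) = ones_count ps + (if b = 1 then 1 else 0)"
  by (simp add: ones_count_def)

lemma length_parity_prefix [simp]: "length (parity_prefix m N f) = N"
  by (simp add: parity_prefix_def)

definition parity_cylinder :: "bit poly \<Rightarrow> bit list \<Rightarrow> bit poly \<Rightarrow> bit poly \<Rightarrow> bool" where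
  "parity_cylinder m ps g h \<longleftrightarrow>
     deg_less g (length ps) \<and> deg_less h (degree m * ones_count ps)
     \<and> (\<forall>f. parity_prefix m (length ps) f = ps \<longleftrightarrow> (\<exists>q. f = g + tt ^ length ps * q))
     \<and> (\<forall>q. (mxT m ^^ length ps) (g + tt ^ length ps * q) = h + m ^ ones_count ps * q)"

lemma parity_cylinder_Nil: "parity_cylinder m [] 0 0"
  by (simp add: parity_cylinder_def deg_less_def parity_prefix_def ones_count_def)

lemma parity_cylinder_snoc:
  fixes b :: bit
  assumes m: "odd_poly m" and cyl: "parity_cylinder m ps g h"
  defines "n \<equiv> length ps" and "s \<equiv> ones_count ps"
  defines "c \<equiv> b + coeff h 0"
  defines "x \<equiv> h + m ^ s * [:c:]"
  shows "parity_cylinder m (ps @ [b]) (g + monom c n) (mxT m x)"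
proof -
  have g: "deg_less g n" and h: "deg_less h (degree m * s)"
    and prefix: "\<And>f. parity_prefix m n f = ps \<longleftrightarrow> (\<exists>q. f = g + tt ^ n * q)"
    and iter: "\<And>q. (mxT m ^^ n) (g + tt ^ n * q) = h + m ^ s * q"
    using cyl by (simp_all add: parity_cylinder_def n_def s_def)
  have parity_n: "parity_term m (g + tt ^ n * q) n = coeff h 0 + coeff q 0" for q
    by (simp add: parity_term_def iter coeff_mult_0 coeff_0_odd_power[OF m])
  have coset: "g + tt ^ n * pCons c q = (g + monom c n) + tt ^ Suc n * q" for q
    by (simp add: monom_altdef algebra_simps)
  have x0: "coeff x 0 = b"
  proof -
    have "coeff x 0 = coeff h 0 + (b + coeff h 0)"
      by (simp add: x_def c_def coeff_mult_0 coeff_0_odd_power[OF m])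
    then show ?thesis by (cases b; cases "coeff h 0") simp_all
  qed
  have g': "deg_less (g + monom c n) (Suc n)"
    using g by (rule deg_less_add_monom)
  have "degree (m ^ s * [:c:]) \<le> degree m * s"
    using degree_mult_le[of "m ^ s" "[:c:]"] degree_power_le[of m s] by simp
  then have degree_x: "degree x \<le> degree m * s"
    using h unfolding x_def deg_less_iff by (auto intro: degree_add_le)
  have "degree m * ones_count (ps @ [b])
      = (if coeff x 0 = 1 then degree m * s + degree m else degree m * s)"
    using x0 by (simp add: ones_count_snoc s_def)
  then have h': "deg_less (mxT m x) (degree m * ones_count (ps @ [b]))"
    using deg_less_mxT[OF degree_x, of m] by simp
  have prefix': "parity_prefix m (Suc n) f = ps @ [b]
      \<longleftrightarrow> (\<exists>q. f = (g + monom c n) + tt ^ Suc n * q)" for f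
  proof -
    have "parity_prefix m (Suc n) f = ps @ [b]
        \<longleftrightarrow> (\<exists>q. f = g + tt ^ n * q \<and> coeff h 0 + coeff q 0 = b)"
      using prefix parity_n by (auto simp: parity_prefix_snoc)
    also have "\<dots> \<longleftrightarrow> (\<exists>q. f = g + tt ^ n * pCons c q)"
      unfolding bit_add_eq_iff c_def by (rule ex_coeff_0_eq_iff)
    finally show ?thesis by (simp only: coset[symmetric])
  qed
  have iter': "(mxT m ^^ Suc n) ((g + monom c n) + tt ^ Suc n * q)
      = mxT m x + m ^ ones_count (ps @ [b]) * q" for q
  proof -
    have "(mxT m ^^ Suc n) ((g + monom c n) + tt ^ Suc n * q)
        = mxT m (h + m ^ s * pCons c q)"
      by (simp only: coset[symmetric] funpow.simps comp_apply iter)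
    also have "h + m ^ s * pCons c q = x + tt * (m ^ s * q)"
      by (simp add: x_def algebra_simps)
    also have "mxT m (x + tt * (m ^ s * q)) = mxT m x + m ^ ones_count (ps @ [b]) * q"
      using x0 by (simp only: mxT_add_tt_mult) (simp add: ones_count_snoc s_def mult.assoc)
    finally show ?thesis .
  qed
  show ?thesis
    unfolding parity_cylinder_def using g' h' prefix' iter' by (simp add: n_def)
qed

lemma ex_parity_cylinder: "odd_poly m \<Longrightarrow> \<exists>g h. parity_cylinder m ps g h"
proof (induction ps rule: rev_induct)
  case Nil
  then show ?case using parity_cylinder_Nil by blast
next
  case (snoc b ps)
  then show ?case using parity_cylinder_snoc by blast
qed

lemma parity_prefix_eq_iff_tt_power_dvd:
  assumes "odd_poly m"
  shows "parity_prefix m N f = parity_prefix m N g \<longleftrightarrow> tt ^ N dvd f - g"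
proof -
  obtain G H where "parity_cylinder m (parity_prefix m N f) G H"
    using ex_parity_cylinder[OF assms] by blast
  then have coset: "parity_prefix m N f' = parity_prefix m N f \<longleftrightarrow> tt ^ N dvd f' - G" for f'
    by (simp add: parity_cylinder_def dvd_def diff_eq_eq add.commute[of G])
  have "tt ^ N dvd f - g \<longleftrightarrow> tt ^ N dvd (f - G) - (g - G)"
    by simp
  also have "\<dots> \<longleftrightarrow> tt ^ N dvd g - G"
    using coset[of f] by (intro dvd_diff_right_iff) simp
  finally show ?thesis
    using coset[of g] by auto
qed

lemma bij_betw_parity_prefix:
  assumes m: "odd_poly m" and "N \<ge> 1"
  shows "bij_betw (parity_prefix m N) {f. degree f < N} {ps. length ps = N}"
proof (rule bij_betwI')
  fix f g :: "bit poly"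
  assume "f \<in> {f. degree f < N}" and "g \<in> {f. degree f < N}"
  then show "parity_prefix m N f = parity_prefix m N g \<longleftrightarrow> f = g"
    using eq_if_X_power_dvd_diff parity_prefix_eq_iff_tt_power_dvd[OF m] by auto
next
  fix ps :: "bit list"
  assume "ps \<in> {ps. length ps = N}"
  moreover obtain g h where "parity_cylinder m ps g h"
    using ex_parity_cylinder[OF m] by blast
  ultimately have "degree g < N" and "parity_prefix m N g = ps"
    using \<open>N \<ge> 1\<close> by (auto simp: parity_cylinder_def deg_less_iff intro: exI[of _ 0])
  then show "\<exists>f\<in>{f. degree f < N}. ps = parity_prefix m N f" by auto
qed simp

theorem mainTheorem2:
  fixes m :: "bit poly" and N d :: nat
  assumes "odd_poly m" and "degree m = d" and "N \<ge> 1"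
  shows "(\<forall>f g. [:0, 1:] ^ N dvd (f - g) \<longrightarrow> parity_prefix m N f = parity_prefix m N g)
    \<and> bij_betw (parity_prefix m N) {f. degree f < N} {ps. length ps = N}
    \<and> (\<forall>ps. length ps = N \<longrightarrow>
          (\<exists>g h. degree g < N \<and> (h = 0 \<or> degree h < d * ones_count ps)
             \<and> (\<forall>f. parity_prefix m N f = ps \<longleftrightarrow> (\<exists>q. f = g + [:0, 1:] ^ N * q))
             \<and> (\<forall>q. (mxT m ^^ N) (g + [:0, 1:] ^ N * q) = h + m ^ ones_count ps * q)))
    \<and> map_pmf (parity_prefix m N) (pmf_of_set {f. degree f < N}) = pmf_of_set {ps. length ps = N}"
proof (intro conjI allI impI)
  show "parity_prefix m N f = parity_prefix m N g" if "tt ^ N dvd f - g" for f g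
    using that parity_prefix_eq_iff_tt_power_dvd[OF assms(1)] by blast
  show bij: "bij_betw (parity_prefix m N) {f. degree f < N} {ps. length ps = N}"
    using bij_betw_parity_prefix[OF assms(1,3)] .
  show "\<exists>g h. degree g < N \<and> (h = 0 \<or> degree h < d * ones_count ps)
      \<and> (\<forall>f. parity_prefix m N f = ps \<longleftrightarrow> (\<exists>q. f = g + tt ^ N * q))
      \<and> (\<forall>q. (mxT m ^^ N) (g + tt ^ N * q) = h + m ^ ones_count ps * q)"
    if "length ps = N" for ps
  proof -
    obtain g h where "parity_cylinder m ps g h"
      using ex_parity_cylinder[OF assms(1)] by blast
    then show ?thesis
      using that assms(2,3)
      by (intro exI[of _ g] exI[of _ h]) (auto simp: parity_cylinder_def deg_less_iff)
  qed
  have "finite {f :: bit poly. degree f < N}"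
    using bij_betw_finite[OF bij] finite_bit_lists_length_eq by blast
  moreover have "{f :: bit poly. degree f < N} \<noteq> {}"
    using assms(3) by (auto intro: exI[of _ 0])
  ultimately show "map_pmf (parity_prefix m N) (pmf_of_set {f. degree f < N})
      = pmf_of_set {ps. length ps = N}"
    using map_pmf_of_set_bij_betw[OF bij] by blast
qed

end
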